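(* Let $d\ge 2$ and let $W_1,\dots,W_n$ be hyperplanes in $\mathbb R^d$ which do phase retrieval. Then $n\ge 2d-2$. Moreover, if $n=2d-2$ and $W_i^\perp=\operatorname{span}\{\phi_i\}$ for $i=1,\dots,2d-2$, then $\{\phi_i\}_{i=1}^{2d-2}$ is full spark.
   Context: A hyperplane is a subspace of dimension $d-1$. A family of subspaces $\{W_i\}$ with orthogonal projections $P_i$ does phase retrieval if whenever $x,y\in\mathbb R^d$ satisfy $\|P_ix\|=\|P_iy\|$ for all $i$, then $x=\pm y$. A family of vectors in $\mathbb R^d$ is full spark if every subset of $d$ of its vectors is linearly independent. *)

theory Defs
  imports "HOL-Analysis.Analysis"
begin

definition orth_proj :: "('a::real_inner) set \<Rightarrow> 'a \<Rightarrow> 'a" where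
  "orth_proj W x = (THE p. p \<in> W \<and> x - p \<in> orthogonal_comp W)"

definition does_phase_retrieval :: "nat \<Rightarrow> (nat \<Rightarrow> ('a::real_inner) set) \<Rightarrow> bool" where
  "does_phase_retrieval n W \<longleftrightarrow>
     (\<forall>x y. (\<forall>i<n. norm (orth_proj (W i) x) = norm (orth_proj (W i) y)) \<longrightarrow> x = y \<or> x = - y)"

definition hyperplane :: "('a::euclidean_space) set \<Rightarrow> bool" where
  "hyperplane W \<longleftrightarrow> subspace W \<and> dim W = DIM('a) - 1"

definition full_spark :: "nat \<Rightarrow> (nat \<Rightarrow> ('a::euclidean_space)) \<Rightarrow> bool" where
  "full_spark n phi \<longleftrightarrow>
     (\<forall>S. S \<subseteq> {..<n} \<and> card S = DIM('a) \<longrightarrow> inj_on phi S \<and> independent (phi ` S))"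

end

theory Submission
  imports Defs
begin

text \<open>Each hyperplane is the orthogonal complement of its normal line, so
\<open>\<parallel>P\<^sub>i x\<parallel>\<^sup>2 = \<parallel>x\<parallel>\<^sup>2 - \<langle>x,\<phi>\<^sub>i\<rangle>\<^sup>2/\<parallel>\<phi>\<^sub>i\<parallel>\<^sup>2\<close>, and phase retrieval by the hyperplanes
amounts to phase retrieval by the normals. If the indices split as \<open>A \<union> B\<close> with
\<open>\<phi>(A)\<close> spanning a proper subspace and \<open>|B| \<le> d - 2\<close>, pick \<open>u \<noteq> 0\<close> orthogonal to
\<open>\<phi>(A)\<close> and \<open>v \<noteq> 0\<close> orthogonal to \<open>u\<close> and \<open>\<phi>(B)\<close>. Then \<open>u + v\<close> and \<open>u - v\<close> have
equal norms and equal measurements \<open>|\<langle>_,\<phi>\<^sub>i\<rangle>|\<close> without being equal up to sign.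
With \<open>n < 2d - 2\<close> take \<open>|A| = d - 1\<close>; with \<open>n = 2d - 2\<close> take \<open>A\<close> to be \<open>d\<close>
indices whose normals are not linearly independent.\<close>

lemma orth_proj_eqI:
  fixes W :: "'a::euclidean_space set"
  assumes "subspace W" "p \<in> W" "x - p \<in> orthogonal_comp W"
  shows "orth_proj W x = p"
  unfolding orth_proj_def
proof (rule the_equality)
  show "p \<in> W \<and> x - p \<in> orthogonal_comp W" using assms by simp
next
  fix q assume q: "q \<in> W \<and> x - q \<in> orthogonal_comp W"
  have "p - q = (x - q) - (x - p)" by simp
  then have "p - q \<in> orthogonal_comp W" using q assms
    by (metis subspace_diff subspace_orthogonal_comp)
  moreover have "p - q \<in> W" using q assms by (simp add: subspace_diff)
  ultimately have "p - q = 0" using orthogonal_Int_0[OF \<open>subspace W\<close>] by blast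
  then show "q = p" by simp
qed

lemma norm_orth_proj_normal_complement:
  fixes W :: "'a::euclidean_space set"
  assumes W: "subspace W" and normal: "orthogonal_comp W = span {\<phi>}" and "\<phi> \<noteq> 0"
  shows "(norm (orth_proj W x))\<^sup>2 = (norm x)\<^sup>2 - (x \<bullet> \<phi>)\<^sup>2 / (\<phi> \<bullet> \<phi>)"
proof -
  define c where "c = (x \<bullet> \<phi>) / (\<phi> \<bullet> \<phi>)"
  have \<phi>\<phi>: "\<phi> \<bullet> \<phi> \<noteq> 0" using \<open>\<phi> \<noteq> 0\<close> by simp
  have "W = orthogonal_comp (span {\<phi>})"
    using orthogonal_comp_self[OF W] normal by simp
  then have "x - c *\<^sub>R \<phi> \<in> W"
    unfolding orthogonal_comp_def orthogonal_def
    using \<phi>\<phi> by (auto simp: span_singleton c_def inner_diff_right inner_commute)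
  moreover have "x - (x - c *\<^sub>R \<phi>) \<in> orthogonal_comp W"
    unfolding normal by (simp add: span_base span_mul)
  ultimately have "orth_proj W x = x - c *\<^sub>R \<phi>"
    by (rule orth_proj_eqI[OF W])
  then have "(norm (orth_proj W x))\<^sup>2 = (x - c *\<^sub>R \<phi>) \<bullet> (x - c *\<^sub>R \<phi>)"
    by (simp add: power2_norm_eq_inner)
  also have "\<dots> = x \<bullet> x - 2 * c * (x \<bullet> \<phi>) + c * c * (\<phi> \<bullet> \<phi>)"
    by (simp add: inner_commute algebra_simps)
  also have "\<dots> = x \<bullet> x - (x \<bullet> \<phi>)\<^sup>2 / (\<phi> \<bullet> \<phi>)"
    using \<phi>\<phi> by (simp add: c_def field_simps power2_eq_square)
  finally show ?thesis by (simp add: power2_norm_eq_inner)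
qed

lemma hyperplane_normal_nonzero:
  fixes W :: "'a::euclidean_space set"
  assumes "hyperplane W" "orthogonal_comp W = span {\<phi>}"
  shows "\<phi> \<noteq> 0"
proof
  assume "\<phi> = 0"
  then have "orthogonal_comp W = {0}" using assms(2) by simp
  then have "W = UNIV" using orthogonal_comp_self[of W] assms(1)
    by (simp add: hyperplane_def)
  then have "DIM('a) = DIM('a) - 1" using assms(1) by (simp add: hyperplane_def)
  then show False using DIM_positive[where 'a='a] by linarith
qed

lemma hyperplane_obtains_normal:
  fixes W :: "'a::euclidean_space set"
  assumes "hyperplane W"
  obtains \<phi> where "orthogonal_comp W = span {\<phi>}"
proof -
  have W: "subspace W" using assms by (simp add: hyperplane_def)
  have "{y \<in> UNIV. \<forall>x \<in> W. orthogonal x y} = orthogonal_comp W"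
    by (auto simp: orthogonal_comp_def)
  then have "dim (orthogonal_comp W) + dim W = DIM('a)"
    using dim_subspace_orthogonal_to_vectors[OF W subspace_UNIV] by simp
  moreover have "dim W = DIM('a) - 1" using assms by (simp add: hyperplane_def)
  ultimately have dim1: "dim (orthogonal_comp W) = 1"
    using DIM_positive[where 'a='a] by linarith
  obtain B where B: "B \<subseteq> orthogonal_comp W" "independent B"
    "orthogonal_comp W \<subseteq> span B" "card B = dim (orthogonal_comp W)"
    using basis_exists by blast
  then obtain \<phi> where "B = {\<phi>}" using dim1 by (metis card_1_singletonE)
  moreover have "span B = orthogonal_comp W"
    using B by (metis span_subspace subspace_orthogonal_comp)
  ultimately show ?thesis using that by auto
qed

lemma norm_orth_proj_hyperplane_eq:
  fixes W :: "'a::euclidean_space set"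
  assumes "hyperplane W" "orthogonal_comp W = span {\<phi>}"
    and "norm x = norm y" "(x \<bullet> \<phi>)\<^sup>2 = (y \<bullet> \<phi>)\<^sup>2"
  shows "norm (orth_proj W x) = norm (orth_proj W y)"
proof -
  have "subspace W" using assms(1) by (simp add: hyperplane_def)
  note proj = norm_orth_proj_normal_complement[OF this assms(2)
      hyperplane_normal_nonzero[OF assms(1,2)]]
  have "(norm (orth_proj W x))\<^sup>2 = (norm (orth_proj W y))\<^sup>2"
    using assms(3,4) by (simp add: proj)
  then show ?thesis by simp
qed

lemma obtain_orthogonal_pair:
  fixes S T :: "'a::euclidean_space set"
  assumes "dim S < DIM('a)" "finite T" "card T + 2 \<le> DIM('a)"
  obtains u v where "u \<noteq> 0" "v \<noteq> 0" "u \<bullet> v = 0"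
    "\<And>s. s \<in> S \<Longrightarrow> u \<bullet> s = 0" "\<And>t. t \<in> T \<Longrightarrow> v \<bullet> t = 0"
proof -
  obtain u where "u \<noteq> 0" and u: "\<And>s. s \<in> span S \<Longrightarrow> orthogonal u s"
    using orthogonal_to_subspace_exists[OF assms(1)] by blast
  have "dim (insert u T) \<le> card (insert u T)"
    using assms(2) by (simp add: dim_le_card')
  also have "\<dots> \<le> card T + 1"
    using assms(2) by (simp add: card_insert_if)
  finally have "dim (insert u T) < DIM('a)" using assms(3) by simp
  then obtain v where "v \<noteq> 0" and v: "\<And>y. y \<in> span (insert u T) \<Longrightarrow> orthogonal v y"
    using orthogonal_to_subspace_exists by blast
  show ?thesis
  proof
    show "u \<bullet> v = 0" using v[of u] by (simp add: span_base orthogonal_def inner_commute)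
    show "u \<bullet> s = 0" if "s \<in> S" for s
      using u[of s] that by (simp add: span_base orthogonal_def)
    show "v \<bullet> t = 0" if "t \<in> T" for t
      using v[of t] that by (simp add: span_base orthogonal_def)
  qed fact+
qed

lemma not_phase_retrieval_if_split:
  fixes W :: "nat \<Rightarrow> 'a::euclidean_space set"
  assumes hyp: "\<forall>i<n. hyperplane (W i)"
    and normal: "\<forall>i<n. orthogonal_comp (W i) = span {\<phi> i}"
    and "dim (\<phi> ` A) < DIM('a)" "finite B" "card B + 2 \<le> DIM('a)"
    and cover: "{..<n} \<subseteq> A \<union> B"
  shows "\<not> does_phase_retrieval n W"
proof -
  have "finite (\<phi> ` B)" "card (\<phi> ` B) + 2 \<le> DIM('a)"
    using assms(4,5) card_image_le[of B \<phi>] by auto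
  then obtain u v where "u \<noteq> 0" "v \<noteq> 0" "u \<bullet> v = 0"
    and u: "\<And>s. s \<in> \<phi> ` A \<Longrightarrow> u \<bullet> s = 0" and v: "\<And>t. t \<in> \<phi> ` B \<Longrightarrow> v \<bullet> t = 0"
    by (rule obtain_orthogonal_pair[OF assms(3)]) (rule that)
  have "norm (u + v) = norm (u - v)"
    using \<open>u \<bullet> v = 0\<close> by (simp add: norm_eq_sqrt_inner inner_add inner_diff inner_commute)
  moreover have "((u + v) \<bullet> \<phi> i)\<^sup>2 = ((u - v) \<bullet> \<phi> i)\<^sup>2" if "i < n" for i
    using cover that u[of "\<phi> i"] v[of "\<phi> i"] by (auto simp: inner_add_left inner_diff_left)
  ultimately have "\<forall>i<n. norm (orth_proj (W i) (u + v)) = norm (orth_proj (W i) (u - v))"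
    using hyp normal by (blast intro: norm_orth_proj_hyperplane_eq)
  moreover have "u + v \<noteq> u - v" "u + v \<noteq> - (u - v)"
    using \<open>u \<noteq> 0\<close> \<open>v \<noteq> 0\<close> by (simp_all add: algebra_simps flip: scaleR_2)
  ultimately show ?thesis unfolding does_phase_retrieval_def by blast
qed

lemma inj_on_independent_if_dim_image_eq_card:
  fixes f :: "'a \<Rightarrow> 'b::euclidean_space"
  assumes "finite S" "dim (f ` S) = card S"
  shows "inj_on f S \<and> independent (f ` S)"
proof -
  have "card S \<le> card (f ` S)"
    using assms dim_le_card'[of "f ` S"] by simp
  then have "card (f ` S) = card S"
    using card_image_le[OF assms(1), of f] by linarith
  then show ?thesis
    using assms card_eq_dim[of "f ` S" "f ` S"] inj_on_iff_eq_card[OF assms(1)]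
    by (auto intro: span_base)
qed

lemma hyperplanes_obtain_normals:
  fixes W :: "nat \<Rightarrow> 'a::euclidean_space set"
  assumes "\<forall>i<n. hyperplane (W i)"
  obtains \<phi> where "\<forall>i<n. orthogonal_comp (W i) = span {\<phi> i}"
proof -
  have "\<forall>i. \<exists>\<phi>. i < n \<longrightarrow> orthogonal_comp (W i) = span {\<phi>}"
    using hyperplane_obtains_normal assms by meson
  then show ?thesis using that by metis
qed

lemma phase_retrieval_hyperplanes_card_ge:
  fixes W :: "nat \<Rightarrow> 'a::euclidean_space set"
  assumes hyp: "\<forall>i<n. hyperplane (W i)" and "does_phase_retrieval n W"
  shows "2 * DIM('a) - 2 \<le> n"
proof (rule ccontr)
  assume "\<not> 2 * DIM('a) - 2 \<le> n"
  obtain \<phi> where normal: "\<forall>i<n. orthogonal_comp (W i) = span {\<phi> i}"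
    using hyperplanes_obtain_normals[OF hyp] .
  define A where "A = {..<DIM('a) - 1}"
  define B where "B = {DIM('a) - 1..<n}"
  have "dim (\<phi> ` A) \<le> card (\<phi> ` A)" by (simp add: A_def dim_le_card')
  also have "\<dots> \<le> card A" using card_image_le[of A \<phi>] by (simp add: A_def)
  also have "\<dots> < DIM('a)" using DIM_positive[where 'a='a] by (simp add: A_def)
  finally have "dim (\<phi> ` A) < DIM('a)" .
  moreover have "finite B" by (simp add: B_def)
  moreover have "card B + 2 \<le> DIM('a)"
    using \<open>\<not> 2 * DIM('a) - 2 \<le> n\<close> by (simp add: B_def)
  moreover have "{..<n} \<subseteq> A \<union> B" by (auto simp: A_def B_def)
  ultimately show False
    using not_phase_retrieval_if_split[OF hyp normal] assms(2) by blast
qed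

lemma phase_retrieval_hyperplanes_full_spark:
  fixes W :: "nat \<Rightarrow> 'a::euclidean_space set"
  assumes hyp: "\<forall>i<n. hyperplane (W i)" and "does_phase_retrieval n W"
    and n: "n = 2 * DIM('a) - 2" and normal: "\<forall>i<n. orthogonal_comp (W i) = span {\<phi> i}"
  shows "full_spark n \<phi>"
  unfolding full_spark_def
proof (intro allI impI)
  fix S assume S: "S \<subseteq> {..<n} \<and> card S = DIM('a)"
  then have "finite S" using finite_subset by blast
  have "DIM('a) \<le> n" using S card_mono[of "{..<n}" S] by simp
  moreover have "card ({..<n} - S) = n - DIM('a)"
    using S \<open>finite S\<close> by (simp add: card_Diff_subset)
  ultimately have "card ({..<n} - S) + 2 \<le> DIM('a)" using n DIM_positive[where 'a='a] by linarith
  then have "\<not> dim (\<phi> ` S) < DIM('a)"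
    using not_phase_retrieval_if_split[OF hyp normal] assms(2) by blast
  then have "dim (\<phi> ` S) = card S"
    using S dim_le_card'[OF finite_imageI[OF \<open>finite S\<close>], of \<phi>]
      card_image_le[OF \<open>finite S\<close>, of \<phi>] by simp
  then show "inj_on \<phi> S \<and> independent (\<phi> ` S)"
    using inj_on_independent_if_dim_image_eq_card \<open>finite S\<close> by blast
qed

theorem mainTheorem7:
  fixes W :: "nat \<Rightarrow> (real ^ 'd) set" and n :: nat
  assumes "CARD('d) \<ge> 2"
    and "\<forall>i<n. hyperplane (W i)"
    and "does_phase_retrieval n W"
  shows "n \<ge> 2 * CARD('d) - 2 \<and>
    (n = 2 * CARD('d) - 2 \<longrightarrow>
      (\<forall>phi :: nat \<Rightarrow> real ^ 'd.
         (\<forall>i<n. orthogonal_comp (W i) = span {phi i}) \<longrightarrow> full_spark n phi))"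
  using phase_retrieval_hyperplanes_card_ge[OF assms(2,3)]
    phase_retrieval_hyperplanes_full_spark[OF assms(2,3)]
  by simp

end
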